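(* Let $R$ be a commutative domain, $B=R(t,\sigma,H,J)$, and let $\mathcal O=\{\sigma^k(\mathfrak m):k\in\mathbb Z\}\subseteq\operatorname{Maxspec}(R)$ be an infinite orbit. If $M$ is a simple $B$-module which is an $R$-weight module with $\operatorname{Supp}_R(M)\subseteq\mathcal O$, then $\dim_{R/\sigma^k(\mathfrak m)}M_{\sigma^k(\mathfrak m)}\le1$ for all $k\in\mathbb Z$.
   Context: $\Bbbk$ is a field; all algebras are associative unital $\Bbbk$-algebras. For an algebra $R$ and $\sigma\in\operatorname{Aut}_\Bbbk(R)$, $R[t,t^{-1};\sigma]$ is the skew Laurent ring: generated over $R$ by $t,t^{-1}$ with $tt^{-1}=t^{-1}t=1$ and $t^{\pm1}r=\sigma^{\pm1}(r)t^{\pm1}$ for $r\in R$. Given two-sided ideals $H,J$ of $R$, set $I^{(0)}=R$, $I^{(n)}=J\sigma(J)\cdots\sigma^{n-1}(J)$ for $n\ge1$, and $I^{(n)}=\sigma^{-1}(H)\sigma^{-2}(H)\cdots\sigma^{n}(H)$ for $n\le-1$; it is assumed throughout that $I^{(n)}\neq0$ for all $n\in\mathbb Z$. The Bell–Rogalski (BR) algebra is $R(t,\sigma,H,J)=\bigoplus_{n\in\mathbb Z}I^{(n)}t^n\subseteq R[t,t^{-1};\sigma]$. For $R$ a commutative domain, a left $B$-module $M$ is an $R$-weight module if $M=\bigoplus_{\mathfrak m\in\operatorname{Maxspec}(R)}M_{\mathfrak m}$ where $M_{\mathfrak m}=\{v\in M:\mathfrak m v=0\}$ and $\dim_{R/\mathfrak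 m}M_{\mathfrak m}<\infty$ for all $\mathfrak m$; $\operatorname{Supp}_R(M)=\{\mathfrak m:M_{\mathfrak m}\neq0\}$. $\mathbb Z$ acts on $\operatorname{Maxspec}(R)$ by $k\cdot\mathfrak m=\sigma^k(\mathfrak m)$. *)

theory Defs
  imports Main
begin

definition is_ideal :: "'r::comm_ring_1 set \<Rightarrow> bool" where
  "is_ideal I \<longleftrightarrow> 0 \<in> I \<and> (\<forall>a\<in>I. \<forall>b\<in>I. a + b \<in> I) \<and> (\<forall>r. \<forall>a\<in>I. r * a \<in> I)"

definition is_maximal_ideal :: "'r::comm_ring_1 set \<Rightarrow> bool" where
  "is_maximal_ideal m \<longleftrightarrow> is_ideal m \<and> m \<noteq> UNIV \<and>
     (\<forall>J. is_ideal J \<and> m \<subseteq> J \<longrightarrow> J = m \<or> J = UNIV)"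

definition ideal_mult :: "'r::comm_ring_1 set \<Rightarrow> 'r set \<Rightarrow> 'r set" where
  "ideal_mult A B = {(\<Sum>i<(n::nat). a i * b i) | n a b. \<forall>i<n. a i \<in> A \<and> b i \<in> B}"

fun ideal_prod :: "(nat \<Rightarrow> 'r::comm_ring_1 set) \<Rightarrow> nat \<Rightarrow> 'r set" where
  "ideal_prod A 0 = UNIV"
| "ideal_prod A (Suc n) = ideal_mult (ideal_prod A n) (A n)"

definition zpow :: "('r \<Rightarrow> 'r) \<Rightarrow> int \<Rightarrow> 'r \<Rightarrow> 'r" where
  "zpow \<sigma> k = (if 0 \<le> k then \<sigma> ^^ nat k else (inv \<sigma>) ^^ nat (- k))"

text \<open>\<sigma> is a \<Bbbk>-algebra automorphism of R, where the \<Bbbk>-algebra structure of R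
  is given by the ring homomorphism of_k.\<close>
definition k_alg_aut :: "('k::field \<Rightarrow> 'r::comm_ring_1) \<Rightarrow> ('r \<Rightarrow> 'r) \<Rightarrow> bool" where
  "k_alg_aut of_k \<sigma> \<longleftrightarrow> bij \<sigma> \<and> (\<forall>a b. \<sigma> (a + b) = \<sigma> a + \<sigma> b) \<and>
     (\<forall>a b. \<sigma> (a * b) = \<sigma> a * \<sigma> b) \<and> \<sigma> 1 = 1 \<and> (\<forall>c. \<sigma> (of_k c) = of_k c)"

definition k_algebra_str :: "('k::field \<Rightarrow> 'r::comm_ring_1) \<Rightarrow> bool" where
  "k_algebra_str of_k \<longleftrightarrow> (\<forall>a b. of_k (a + b) = of_k a + of_k b) \<and>
     (\<forall>a b. of_k (a * b) = of_k a * of_k b) \<and> of_k 1 = 1"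

definition BR_I :: "('r::comm_ring_1 \<Rightarrow> 'r) \<Rightarrow> 'r set \<Rightarrow> 'r set \<Rightarrow> int \<Rightarrow> 'r set" where
  "BR_I \<sigma> H J n =
     (if n = 0 then UNIV
      else if 0 < n then ideal_prod (\<lambda>i. zpow \<sigma> (int i) ` J) (nat n)
      else ideal_prod (\<lambda>i. zpow \<sigma> (- int (Suc i)) ` H) (nat (- n)))"

text \<open>Elements of R[t,t^-1;\<sigma>] are finitely supported coefficient functions
  f, standing for \<Sum>n f n t^n. Multiplication uses t^i r = \<sigma>^i(r) t^i.\<close>
definition skew_laurent :: "(int \<Rightarrow> 'r::comm_ring_1) set" where
  "skew_laurent = {f. finite {n. f n \<noteq> 0}}"

definition sl_mult :: "('r::comm_ring_1 \<Rightarrow> 'r) \<Rightarrow> (int \<Rightarrow> 'r) \<Rightarrow> (int \<Rightarrow> 'r) \<Rightarrow> (int \<Rightarrow> 'r)" where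
  "sl_mult \<sigma> f g = (\<lambda>n. \<Sum>i\<in>{i. f i \<noteq> 0}. f i * zpow \<sigma> i (g (n - i)))"

definition sl_one :: "int \<Rightarrow> 'r::comm_ring_1" where
  "sl_one = (\<lambda>n. if n = 0 then 1 else 0)"

definition sl_const :: "'r::comm_ring_1 \<Rightarrow> int \<Rightarrow> 'r" where
  "sl_const r = (\<lambda>n. if n = 0 then r else 0)"

text \<open>B = R(t,\<sigma>,H,J) = \<Oplus>_n I^(n) t^n as a subset of R[t,t^-1;\<sigma>].\<close>
definition BR_alg :: "('r::comm_ring_1 \<Rightarrow> 'r) \<Rightarrow> 'r set \<Rightarrow> 'r set \<Rightarrow> (int \<Rightarrow> 'r) set" where
  "BR_alg \<sigma> H J = {f \<in> skew_laurent. \<forall>n. f n \<in> BR_I \<sigma> H J n}"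

definition is_B_module ::
  "('r::comm_ring_1 \<Rightarrow> 'r) \<Rightarrow> 'r set \<Rightarrow> 'r set \<Rightarrow> ((int \<Rightarrow> 'r) \<Rightarrow> 'm::ab_group_add \<Rightarrow> 'm) \<Rightarrow> bool" where
  "is_B_module \<sigma> H J act \<longleftrightarrow>
     (\<forall>b\<in>BR_alg \<sigma> H J. \<forall>b'\<in>BR_alg \<sigma> H J. \<forall>v. act (\<lambda>n. b n + b' n) v = act b v + act b' v) \<and>
     (\<forall>b\<in>BR_alg \<sigma> H J. \<forall>v w. act b (v + w) = act b v + act b w) \<and>
     (\<forall>v. act sl_one v = v) \<and>
     (\<forall>b\<in>BR_alg \<sigma> H J. \<forall>b'\<in>BR_alg \<sigma> H J. \<forall>v. act (sl_mult \<sigma> b b') v = act b (act b' v))"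

definition is_submodule ::
  "('r::comm_ring_1 \<Rightarrow> 'r) \<Rightarrow> 'r set \<Rightarrow> 'r set \<Rightarrow> ((int \<Rightarrow> 'r) \<Rightarrow> 'm::ab_group_add \<Rightarrow> 'm) \<Rightarrow> 'm set \<Rightarrow> bool" where
  "is_submodule \<sigma> H J act N \<longleftrightarrow> 0 \<in> N \<and> (\<forall>v\<in>N. \<forall>w\<in>N. v + w \<in> N) \<and>
     (\<forall>b\<in>BR_alg \<sigma> H J. \<forall>v\<in>N. act b v \<in> N)"

definition is_simple_B_module ::
  "('r::comm_ring_1 \<Rightarrow> 'r) \<Rightarrow> 'r set \<Rightarrow> 'r set \<Rightarrow> ((int \<Rightarrow> 'r) \<Rightarrow> 'm::ab_group_add \<Rightarrow> 'm) \<Rightarrow> bool" where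
  "is_simple_B_module \<sigma> H J act \<longleftrightarrow> is_B_module \<sigma> H J act \<and> (UNIV :: 'm set) \<noteq> {0} \<and>
     (\<forall>N. is_submodule \<sigma> H J act N \<longrightarrow> N = {0} \<or> N = UNIV)"

definition weight_space :: "((int \<Rightarrow> 'r::comm_ring_1) \<Rightarrow> 'm::ab_group_add \<Rightarrow> 'm) \<Rightarrow> 'r set \<Rightarrow> 'm set" where
  "weight_space act m = {v. \<forall>r\<in>m. act (sl_const r) v = 0}"

text \<open>M_m is spanned over R/m (equivalently over R, acting via R/m) by n vectors.\<close>
definition weight_spanned_by :: "((int \<Rightarrow> 'r::comm_ring_1) \<Rightarrow> 'm::ab_group_add \<Rightarrow> 'm) \<Rightarrow> 'r set \<Rightarrow> nat \<Rightarrow> bool" where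
  "weight_spanned_by act m n \<longleftrightarrow> (\<exists>vs. length vs = n \<and> set vs \<subseteq> weight_space act m \<and>
     (\<forall>w\<in>weight_space act m. \<exists>c. w = (\<Sum>i<n. act (sl_const (c i)) (vs ! i))))"

text \<open>Dimension of M_m over R/m: minimal size of a spanning family (when finite).\<close>
definition weight_dim :: "((int \<Rightarrow> 'r::comm_ring_1) \<Rightarrow> 'm::ab_group_add \<Rightarrow> 'm) \<Rightarrow> 'r set \<Rightarrow> nat" where
  "weight_dim act m = (LEAST n. weight_spanned_by act m n)"

definition is_weight_module :: "((int \<Rightarrow> 'r::comm_ring_1) \<Rightarrow> 'm::ab_group_add \<Rightarrow> 'm) \<Rightarrow> bool" where
  "is_weight_module act \<longleftrightarrow>
     (\<forall>v. \<exists>S w. finite S \<and> (\<forall>m\<in>S. is_maximal_ideal m \<and> w m \<in> weight_space act m) \<and>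
            v = (\<Sum>m\<in>S. w m)) \<and>
     (\<forall>S w. finite S \<and> (\<forall>m\<in>S. is_maximal_ideal m \<and> w m \<in> weight_space act m) \<and>
            (\<Sum>m\<in>S. w m) = 0 \<longrightarrow> (\<forall>m\<in>S. w m = 0)) \<and>
     (\<forall>m. is_maximal_ideal m \<longrightarrow> (\<exists>n. weight_spanned_by act m n))"

definition weight_support :: "((int \<Rightarrow> 'r::comm_ring_1) \<Rightarrow> 'm::ab_group_add \<Rightarrow> 'm) \<Rightarrow> 'r set set" where
  "weight_support act = {m. is_maximal_ideal m \<and> weight_space act m \<noteq> {0}}"

end

theory Submission
  imports Defs
begin

text \<open>Let 0 \<noteq> v \<in> M_p with p = \<sigma>^k(m). Simplicity forces M = B v, so every w \<in> M_p is
  b v = \<Sum>_i b_i t^i v with b_i t^i v \<in> M_{\<sigma>^i(p)}. The orbit being infinite, the ideals \<sigma>^i(p) are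
  pairwise distinct, and directness of the weight decomposition leaves w = b_0 v; thus M_p = R v.
  The algebraic input is I(a) \<sigma>^a(I(b)) \<subseteq> I(a+b), i.e. that B is closed under multiplication.\<close>

definition ring_aut :: "('r::comm_ring_1 \<Rightarrow> 'r) \<Rightarrow> bool" where
  "ring_aut f \<longleftrightarrow> bij f \<and> (\<forall>a b. f (a + b) = f a + f b) \<and> (\<forall>a b. f (a * b) = f a * f b)"

lemma ring_aut_bij: "ring_aut f \<Longrightarrow> bij f"
  unfolding ring_aut_def by blast

lemma ring_aut_add: "ring_aut f \<Longrightarrow> f (a + b) = f a + f b"
  unfolding ring_aut_def by blast

lemma ring_aut_mult: "ring_aut f \<Longrightarrow> f (a * b) = f a * f b"
  unfolding ring_aut_def by blast

lemma ring_aut_0: "ring_aut f \<Longrightarrow> f 0 = 0"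
  using ring_aut_add[of f 0 0] by simp

lemma ring_aut_sum: "ring_aut f \<Longrightarrow> f (\<Sum>i\<in>F. g i) = (\<Sum>i\<in>F. f (g i))"
  by (induction F rule: infinite_finite_induct) (simp_all add: ring_aut_0 ring_aut_add)

lemma ring_aut_inv: assumes "ring_aut f" shows "ring_aut (inv f)"
proof -
  have f: "bij f" using assms by (rule ring_aut_bij)
  have "inv f (a + b) = inv f a + inv f b" for a b
    using f ring_aut_add[OF assms, of "inv f a" "inv f b"]
    by (metis bij_inv_eq_iff bij_is_surj surj_f_inv_f)
  moreover have "inv f (a * b) = inv f a * inv f b" for a b
    using f ring_aut_mult[OF assms, of "inv f a" "inv f b"]
    by (metis bij_inv_eq_iff bij_is_surj surj_f_inv_f)
  ultimately show ?thesis using f bij_imp_bij_inv unfolding ring_aut_def by blast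
qed

lemma ring_aut_funpow: "ring_aut f \<Longrightarrow> ring_aut (f ^^ n)"
  by (induction n) (auto simp: ring_aut_def bij_comp)

lemma ring_aut_zpow: "ring_aut \<sigma> \<Longrightarrow> ring_aut (zpow \<sigma> k)"
  unfolding zpow_def by (simp add: ring_aut_funpow ring_aut_inv)

lemma k_alg_aut_imp_ring_aut: "k_alg_aut of_k \<sigma> \<Longrightarrow> ring_aut \<sigma>"
  unfolding k_alg_aut_def ring_aut_def by blast

lemma zpow_0 [simp]: "zpow \<sigma> 0 = id"
  unfolding zpow_def by simp

lemma zpow_succ: assumes "bij \<sigma>" shows "zpow \<sigma> (k + 1) x = \<sigma> (zpow \<sigma> k x)"
proof (cases "0 \<le> k")
  case True
  then have "nat (k + 1) = Suc (nat k)" by simp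
  with True show ?thesis unfolding zpow_def by simp
next
  case False
  then have "nat (- k) = Suc (nat (- (k + 1)))" by simp
  then have "zpow \<sigma> k x = inv \<sigma> (zpow \<sigma> (k + 1) x)"
    using False unfolding zpow_def by (cases "k = -1") simp_all
  with assms show ?thesis by (simp add: bij_is_surj surj_f_inv_f)
qed

lemma zpow_add: assumes "bij \<sigma>" shows "zpow \<sigma> a (zpow \<sigma> b x) = zpow \<sigma> (a + b) x"
proof (induction a rule: int_induct[where k = 0])
  case (step1 i) then show ?case using zpow_succ[OF assms] by (metis add.commute add.left_commute)
next
  case (step2 i)
  have pred: "zpow \<sigma> (k - 1) y = inv \<sigma> (zpow \<sigma> k y)" for k y
    using zpow_succ[OF assms, of "k - 1" y] assms by (simp add: bij_is_inj)
  have "zpow \<sigma> (i - 1) (zpow \<sigma> b x) = inv \<sigma> (zpow \<sigma> (i + b) x)" by (simp add: pred step2)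
  also have "\<dots> = zpow \<sigma> (i + b - 1) x" by (simp add: pred)
  finally show ?case by (simp add: algebra_simps)
qed simp

lemma zpow_image: "bij \<sigma> \<Longrightarrow> zpow \<sigma> a ` zpow \<sigma> b ` X = zpow \<sigma> (a + b) ` X"
  by (simp add: image_image zpow_add)

lemma zpow_inv: "bij \<sigma> \<Longrightarrow> zpow (inv \<sigma>) k = zpow \<sigma> (- k)"
  unfolding zpow_def by (cases "k = 0") (auto simp: inv_inv_eq)

lemma is_ideal_UNIV: "is_ideal UNIV"
  unfolding is_ideal_def by simp

lemma ideal_mult_left: "is_ideal I \<Longrightarrow> x \<in> I \<Longrightarrow> r * x \<in> I"
  unfolding is_ideal_def by blast

lemma ideal_mult_right: "is_ideal I \<Longrightarrow> x \<in> I \<Longrightarrow> x * r \<in> I"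
  unfolding is_ideal_def by (metis mult.commute)

lemma ideal_sum: "is_ideal I \<Longrightarrow> (\<And>i. i \<in> F \<Longrightarrow> f i \<in> I) \<Longrightarrow> (\<Sum>i\<in>F. f i) \<in> I"
  by (induction F rule: infinite_finite_induct) (auto simp: is_ideal_def)

lemma ring_aut_ideal: assumes f: "ring_aut f" and I: "is_ideal I" shows "is_ideal (f ` I)"
  unfolding is_ideal_def
proof (intro conjI ballI allI)
  show "0 \<in> f ` I" using I ring_aut_0[OF f] unfolding is_ideal_def by (metis image_eqI)
  show "a + b \<in> f ` I" if ab: "a \<in> f ` I" "b \<in> f ` I" for a b
  proof -
    obtain x y where "x \<in> I" "y \<in> I" "a = f x" "b = f y" using ab by blast
    moreover have "x + y \<in> I" using I \<open>x \<in> I\<close> \<open>y \<in> I\<close> unfolding is_ideal_def by blast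
    ultimately show ?thesis using ring_aut_add[OF f, of x y] by (metis image_eqI)
  qed
  show "r * a \<in> f ` I" if "a \<in> f ` I" for r a
  proof -
    obtain x where x: "x \<in> I" "a = f x" using \<open>a \<in> f ` I\<close> by blast
    obtain y where "r = f y" using ring_aut_bij[OF f] by (metis bij_is_surj surjD)
    with x f have "r * a = f (y * x)" by (simp add: ring_aut_mult)
    with x I show ?thesis by (simp add: ideal_mult_left)
  qed
qed

lemma ring_aut_maximal_ideal:
  assumes f: "ring_aut f" and m: "is_maximal_ideal m"
  shows "is_maximal_ideal (f ` m)"
  unfolding is_maximal_ideal_def
proof (intro conjI allI impI)
  have b: "bij f" using f by (rule ring_aut_bij)
  then have surj: "f ` UNIV = UNIV" by (simp add: bij_is_surj)
  show "is_ideal (f ` m)" using m f ring_aut_ideal unfolding is_maximal_ideal_def by blast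
  show "f ` m \<noteq> UNIV"
    using m surj inj_image_eq_iff[OF bij_is_inj[OF b], of m UNIV] unfolding is_maximal_ideal_def by auto
  fix K assume K: "is_ideal K \<and> f ` m \<subseteq> K"
  have "is_ideal (f -` K)"
    using K f unfolding is_ideal_def by (auto simp: ring_aut_0 ring_aut_add ring_aut_mult)
  with K m have "f -` K = m \<or> f -` K = UNIV" unfolding is_maximal_ideal_def by blast
  moreover have "f ` (f -` K) = K" using b by (simp add: bij_is_surj surj_image_vimage_eq)
  ultimately show "K = f ` m \<or> K = UNIV" using surj by metis
qed

lemma ideal_mult_memI:
  "(\<And>i. i < (n::nat) \<Longrightarrow> a i \<in> X \<and> b i \<in> Y) \<Longrightarrow> (\<Sum>i<n. a i * b i) \<in> ideal_mult X Y"
  unfolding ideal_mult_def by (rule CollectI, rule exI[of _ n], rule exI[of _ a], rule exI[of _ b]) simp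

lemma ideal_mult_ideal: assumes X: "is_ideal X" shows "is_ideal (ideal_mult X Y)"
  unfolding is_ideal_def
proof (intro conjI ballI allI)
  show "0 \<in> ideal_mult X Y" using ideal_mult_memI[of 0] by simp
  show "a + b \<in> ideal_mult X Y" if ha: "a \<in> ideal_mult X Y" and hb: "b \<in> ideal_mult X Y" for a b
  proof -
    obtain n :: nat and x y where a: "a = (\<Sum>i<n. x i * y i)" "\<forall>i<n. x i \<in> X \<and> y i \<in> Y"
      using ha unfolding ideal_mult_def by blast
    obtain k :: nat and x' y' where b: "b = (\<Sum>i<k. x' i * y' i)" "\<forall>i<k. x' i \<in> X \<and> y' i \<in> Y"
      using hb unfolding ideal_mult_def by blast
    define u where "u i = (if i < n then x i else x' (i - n))" for i
    define w where "w i = (if i < n then y i else y' (i - n))" for i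
    have "(\<Sum>i<n + k. u i * w i) = (\<Sum>i<n. u i * w i) + (\<Sum>i<k. u (n + i) * w (n + i))"
      by (induction k) (simp_all add: add.assoc)
    then have "a + b = (\<Sum>i<n + k. u i * w i)" unfolding a b u_def w_def by simp
    moreover have "\<And>i. i < n + k \<Longrightarrow> u i \<in> X \<and> w i \<in> Y" using a b unfolding u_def w_def by auto
    ultimately show ?thesis using ideal_mult_memI[of "n + k" u X w Y] by simp
  qed
  show "r * a \<in> ideal_mult X Y" if ha: "a \<in> ideal_mult X Y" for r a
  proof -
    obtain n :: nat and x y where a: "a = (\<Sum>i<n. x i * y i)" "\<forall>i<n. x i \<in> X \<and> y i \<in> Y"
      using ha unfolding ideal_mult_def by blast
    have "r * a = (\<Sum>i<n. (r * x i) * y i)" unfolding a by (simp add: sum_distrib_left mult.assoc)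
    moreover have "\<And>i. i < n \<Longrightarrow> r * x i \<in> X \<and> y i \<in> Y" using a X by (simp add: ideal_mult_left)
    ultimately show ?thesis using ideal_mult_memI[of n "\<lambda>i. r * x i" X y Y] by simp
  qed
qed

lemma ideal_mult_subset_left: assumes X: "is_ideal X" shows "ideal_mult X Y \<subseteq> X"
proof
  fix a assume "a \<in> ideal_mult X Y"
  then obtain n :: nat and x y where "a = (\<Sum>i<n. x i * y i)" "\<forall>i<n. x i \<in> X \<and> y i \<in> Y"
    unfolding ideal_mult_def by blast
  with X show "a \<in> X" using ideal_sum[OF X, of "{..<n}"] by (simp add: ideal_mult_right)
qed

lemma ideal_mult_mono_left: "X \<subseteq> X' \<Longrightarrow> ideal_mult X Y \<subseteq> ideal_mult X' Y"
  unfolding ideal_mult_def by fast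

lemma ideal_prod_ideal: "is_ideal (ideal_prod A n)"
  by (induction n) (simp_all add: is_ideal_UNIV ideal_mult_ideal)

lemma ideal_prod_antimono: "k \<le> n \<Longrightarrow> ideal_prod A n \<subseteq> ideal_prod A k"
proof (induction n rule: dec_induct)
  case (step n)
  then show ?case using ideal_mult_subset_left[OF ideal_prod_ideal] by (simp, blast)
qed simp

lemma ideal_prod_drop: "k \<le> n \<Longrightarrow> ideal_prod A n \<subseteq> ideal_prod (\<lambda>i. A (i + k)) (n - k)"
proof (induction n rule: dec_induct)
  case (step n)
  then show ?case using ideal_mult_mono_left by (simp add: Suc_diff_le)
qed simp

lemma ideal_prod_append:
  "x \<in> ideal_prod A n \<Longrightarrow> y \<in> ideal_prod (\<lambda>i. A (n + i)) m \<Longrightarrow> x * y \<in> ideal_prod A (n + m)"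
proof (induction m arbitrary: y)
  case 0 then show ?case using ideal_mult_right[OF ideal_prod_ideal] by simp
next
  case (Suc m)
  obtain k :: nat and c d where y: "y = (\<Sum>i<k. c i * d i)"
      "\<forall>i<k. c i \<in> ideal_prod (\<lambda>i. A (n + i)) m \<and> d i \<in> A (n + m)"
    using Suc.prems(2) by (auto simp: ideal_mult_def)
  have "x * y = (\<Sum>i<k. (x * c i) * d i)" unfolding y by (simp add: sum_distrib_left mult.assoc)
  with y Suc show ?case by (auto intro: ideal_mult_memI)
qed

lemma ideal_prod_image:
  "ring_aut f \<Longrightarrow> x \<in> ideal_prod A n \<Longrightarrow> f x \<in> ideal_prod (\<lambda>i. f ` A i) n"
proof (induction n arbitrary: x)
  case (Suc n)
  obtain k :: nat and c d where x: "x = (\<Sum>i<k. c i * d i)" "\<forall>i<k. c i \<in> ideal_prod A n \<and> d i \<in> A n"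
    using Suc.prems(2) by (auto simp: ideal_mult_def)
  have "f x = (\<Sum>i<k. f (c i) * f (d i))" unfolding x using Suc.prems(1) by (simp add: ring_aut_sum ring_aut_mult)
  with x Suc show ?case by (auto intro: ideal_mult_memI)
qed simp

lemma BR_I_ideal: "is_ideal (BR_I \<sigma> H J n)"
  unfolding BR_I_def by (simp add: is_ideal_UNIV ideal_prod_ideal)

lemma BR_I_nonneg: "0 \<le> n \<Longrightarrow> BR_I \<sigma> H J n = ideal_prod (\<lambda>i. zpow \<sigma> (int i) ` J) (nat n)"
  unfolding BR_I_def by simp

lemma BR_I_nonpos: "n \<le> 0 \<Longrightarrow> BR_I \<sigma> H J n = ideal_prod (\<lambda>i. zpow \<sigma> (- int (Suc i)) ` H) (nat (- n))"
  unfolding BR_I_def by simp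

text \<open>The shift by inv \<sigma> is needed because I(-n) begins with the factor \<sigma>^-1(H), whereas I(n)
  begins with J itself. This symmetry reduces the multiplication law of the graded pieces to a \<ge> 0.\<close>
lemma BR_I_uminus:
  assumes "bij \<sigma>"
  shows "BR_I \<sigma> H J (- n) = BR_I (inv \<sigma>) (inv \<sigma> ` J) (inv \<sigma> ` H) n"
proof -
  have inv: "inv \<sigma> = zpow \<sigma> (-1)" unfolding zpow_def by simp
  have shift: "zpow (inv \<sigma>) k ` inv \<sigma> ` X = zpow \<sigma> (- k - 1) ` X" for k X
  proof -
    have "zpow (inv \<sigma>) k ` inv \<sigma> ` X = zpow \<sigma> (- k) ` zpow \<sigma> (-1) ` X"
      by (simp only: zpow_inv[OF assms]) (simp add: inv)
    then show ?thesis by (simp add: zpow_image[OF assms])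
  qed
  have "zpow (inv \<sigma>) (int i) ` inv \<sigma> ` H = zpow \<sigma> (- int (Suc i)) ` H" for i
    unfolding shift by (rule arg_cong[where f = "\<lambda>k. zpow \<sigma> k ` H"]) simp
  moreover have "zpow (inv \<sigma>) (- int (Suc i)) ` inv \<sigma> ` J = zpow \<sigma> (int i) ` J" for i
    unfolding shift by simp
  ultimately show ?thesis unfolding BR_I_def by simp
qed

lemma BR_I_mult_nonneg:
  assumes \<sigma>: "ring_aut \<sigma>" and a: "0 \<le> a"
    and r: "r \<in> BR_I \<sigma> H J a" and s: "s \<in> BR_I \<sigma> H J b"
  shows "r * zpow \<sigma> a s \<in> BR_I \<sigma> H J (a + b)"
proof -
  have bij: "bij \<sigma>" using \<sigma> by (rule ring_aut_bij)
  define P where "P i = zpow \<sigma> (int i) ` J" for i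
  define Q where "Q i = zpow \<sigma> (- int (Suc i)) ` H" for i
  have rP: "r \<in> ideal_prod P (nat a)" using r a unfolding P_def by (simp add: BR_I_nonneg)
  consider "0 \<le> b" | "b < 0" "0 \<le> a + b" | "a + b < 0" by linarith
  then show ?thesis
  proof cases
    case 1
    have "s \<in> ideal_prod P (nat b)" using s 1 unfolding P_def by (simp add: BR_I_nonneg)
    from ideal_prod_image[OF ring_aut_zpow[OF \<sigma>] this]
    have "zpow \<sigma> a s \<in> ideal_prod (\<lambda>i. P (nat a + i)) (nat b)"
      unfolding P_def zpow_image[OF bij] using a by simp
    from ideal_prod_append[OF rP this] show ?thesis
      using a 1 unfolding P_def by (simp add: BR_I_nonneg nat_add_distrib)
  next
    case 2
    have "nat (a + b) \<le> nat a" using 2 by simp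
    then have "r \<in> ideal_prod P (nat (a + b))" using rP ideal_prod_antimono by blast
    then show ?thesis using 2 ideal_mult_right[OF ideal_prod_ideal] unfolding P_def by (simp add: BR_I_nonneg)
  next
    case 3
    have "s \<in> ideal_prod Q (nat (- b))" using s 3 a unfolding Q_def by (simp add: BR_I_nonpos)
    from ideal_prod_image[OF ring_aut_zpow[OF \<sigma>] this]
    have "zpow \<sigma> a s \<in> ideal_prod (\<lambda>i. zpow \<sigma> a ` Q i) (nat (- b))" .
    moreover have "nat a \<le> nat (- b)" "nat (- b) - nat a = nat (- (a + b))" using 3 a by auto
    ultimately have "zpow \<sigma> a s \<in> ideal_prod (\<lambda>i. zpow \<sigma> a ` Q (i + nat a)) (nat (- (a + b)))"
      using ideal_prod_drop[of "nat a" "nat (- b)" "\<lambda>i. zpow \<sigma> a ` Q i"] by auto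
    moreover have "zpow \<sigma> a ` Q (i + nat a) = Q i" for i
      unfolding Q_def zpow_image[OF bij] using a by (simp add: algebra_simps)
    ultimately have "zpow \<sigma> a s \<in> BR_I \<sigma> H J (a + b)" using 3 unfolding Q_def by (simp add: BR_I_nonpos)
    then show ?thesis by (rule ideal_mult_left[OF BR_I_ideal])
  qed
qed

lemma BR_I_mult:
  assumes \<sigma>: "ring_aut \<sigma>" and r: "r \<in> BR_I \<sigma> H J a" and s: "s \<in> BR_I \<sigma> H J b"
  shows "r * zpow \<sigma> a s \<in> BR_I \<sigma> H J (a + b)"
proof (cases "0 \<le> a")
  case False
  have bij: "bij \<sigma>" using \<sigma> by (rule ring_aut_bij)
  let ?I = "BR_I (inv \<sigma>) (inv \<sigma> ` J) (inv \<sigma> ` H)"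
  have "r \<in> ?I (- a)" "s \<in> ?I (- b)" using r s BR_I_uminus[OF bij] by (metis minus_minus)+
  from BR_I_mult_nonneg[OF ring_aut_inv[OF \<sigma>] _ this] False
  have "r * zpow (inv \<sigma>) (- a) s \<in> ?I (- a + - b)" by simp
  moreover have "BR_I \<sigma> H J (a + b) = ?I (- a + - b)"
    using BR_I_uminus[OF bij, of H J "- a + - b"] by (simp add: add.commute)
  ultimately show ?thesis by (simp add: zpow_inv[OF bij])
qed (use assms BR_I_mult_nonneg in blast)

definition sl_single :: "int \<Rightarrow> 'r::comm_ring_1 \<Rightarrow> int \<Rightarrow> 'r" where
  "sl_single n r = (\<lambda>k. if k = n then r else 0)"

lemma sl_const_eq_single: "sl_const r = sl_single 0 r"
  unfolding sl_const_def sl_single_def by simp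

lemma sl_one_eq_const: "sl_one = sl_const 1"
  unfolding sl_one_def sl_const_def by simp

lemma sl_mult_single:
  assumes "ring_aut \<sigma>"
  shows "sl_mult \<sigma> (sl_single a r) (sl_single b s) = sl_single (a + b) (r * zpow \<sigma> a s)"
proof (cases "r = 0")
  case False
  then have "{i. sl_single a r i \<noteq> 0} = {a}" unfolding sl_single_def by auto
  then show ?thesis unfolding sl_mult_def
    by (auto simp: sl_single_def ring_aut_0[OF ring_aut_zpow[OF assms]])
qed (simp add: sl_mult_def sl_single_def)

lemma BR_alg_coeff: "f \<in> BR_alg \<sigma> H J \<Longrightarrow> f n \<in> BR_I \<sigma> H J n"
  unfolding BR_alg_def by blast

lemma BR_alg_finite_support: "f \<in> BR_alg \<sigma> H J \<Longrightarrow> finite {n. f n \<noteq> 0}"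
  unfolding BR_alg_def skew_laurent_def by blast

lemma zero_in_BR_I: "0 \<in> BR_I \<sigma> H J n"
  using BR_I_ideal unfolding is_ideal_def by blast

lemma zero_in_BR_alg: "(\<lambda>_. 0) \<in> BR_alg \<sigma> H J"
  unfolding BR_alg_def skew_laurent_def by (simp add: zero_in_BR_I)

lemma sl_single_in_BR_alg: "r \<in> BR_I \<sigma> H J n \<Longrightarrow> sl_single n r \<in> BR_alg \<sigma> H J"
  unfolding BR_alg_def skew_laurent_def sl_single_def
  by (auto simp: zero_in_BR_I intro: finite_subset[of _ "{n}"])

lemma sl_const_in_BR_alg: "sl_const r \<in> BR_alg \<sigma> H J"
  unfolding sl_const_eq_single by (rule sl_single_in_BR_alg) (simp add: BR_I_def)

lemma BR_alg_add:
  assumes "f \<in> BR_alg \<sigma> H J" "g \<in> BR_alg \<sigma> H J"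
  shows "(\<lambda>n. f n + g n) \<in> BR_alg \<sigma> H J"
proof -
  have "{n. f n + g n \<noteq> 0} \<subseteq> {n. f n \<noteq> 0} \<union> {n. g n \<noteq> 0}" by auto
  then have "finite {n. f n + g n \<noteq> 0}"
    by (rule finite_subset) (simp add: BR_alg_finite_support[OF assms(1)] BR_alg_finite_support[OF assms(2)])
  moreover have "f n + g n \<in> BR_I \<sigma> H J n" for n
    using BR_I_ideal[of \<sigma> H J n] BR_alg_coeff[OF assms(1), of n] BR_alg_coeff[OF assms(2), of n]
    unfolding is_ideal_def by blast
  ultimately show ?thesis unfolding BR_alg_def skew_laurent_def by blast
qed

lemma BR_alg_mult:
  assumes \<sigma>: "ring_aut \<sigma>" and f: "f \<in> BR_alg \<sigma> H J" and g: "g \<in> BR_alg \<sigma> H J"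
  shows "sl_mult \<sigma> f g \<in> BR_alg \<sigma> H J"
proof -
  let ?S = "\<lambda>h. {n. h n \<noteq> (0::'a)}"
  have "f i * zpow \<sigma> i (g (n - i)) \<in> BR_I \<sigma> H J n" for i n
    using BR_I_mult[OF \<sigma> BR_alg_coeff[OF f, of i] BR_alg_coeff[OF g, of "n - i"]] by simp
  then have coeff: "sl_mult \<sigma> f g n \<in> BR_I \<sigma> H J n" for n
    unfolding sl_mult_def by (intro ideal_sum[OF BR_I_ideal])
  have "?S (sl_mult \<sigma> f g) \<subseteq> (\<lambda>(i, j). i + j) ` (?S f \<times> ?S g)"
  proof
    fix n assume "n \<in> ?S (sl_mult \<sigma> f g)"
    then obtain i where "i \<in> ?S f" "f i * zpow \<sigma> i (g (n - i)) \<noteq> 0"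
      unfolding sl_mult_def by (auto elim: sum.not_neutral_contains_not_neutral)
    then have "i \<in> ?S f" "n - i \<in> ?S g" using ring_aut_0[OF ring_aut_zpow[OF \<sigma>]] by auto
    then show "n \<in> (\<lambda>(i, j). i + j) ` (?S f \<times> ?S g)" by (intro image_eqI[of _ _ "(i, n - i)"]) auto
  qed
  moreover have "finite ((\<lambda>(i, j). i + j) ` (?S f \<times> ?S g))"
    using BR_alg_finite_support[OF f] BR_alg_finite_support[OF g] by simp
  ultimately have "finite (?S (sl_mult \<sigma> f g))" by (rule finite_subset)
  with coeff show ?thesis unfolding BR_alg_def skew_laurent_def by blast
qed

lemma weight_module_component_eq_0:
  assumes M: "is_weight_module act" and F: "finite F" and inj: "inj_on \<phi> F"
    and x: "\<And>i. i \<in> F \<Longrightarrow> is_maximal_ideal (\<phi> i) \<and> x i \<in> weight_space act (\<phi> i)"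
    and sum: "(\<Sum>i\<in>F. x i) = 0" and i: "i \<in> F"
  shows "x i = 0"
proof -
  define w where "w q = x (the_inv_into F \<phi> q)" for q
  have w: "w (\<phi> j) = x j" if "j \<in> F" for j
    unfolding w_def using the_inv_into_f_f[OF inj that] by simp
  have "(\<Sum>q\<in>\<phi> ` F. w q) = 0" using sum w by (simp add: sum.reindex[OF inj])
  moreover have "\<forall>q\<in>\<phi> ` F. is_maximal_ideal q \<and> w q \<in> weight_space act q" using x w by auto
  ultimately have "\<forall>q\<in>\<phi> ` F. w q = 0"
    using M F unfolding is_weight_module_def by (metis finite_imageI)
  then show ?thesis using w i by auto
qed

lemma infinite_orbit_aperiodic:
  assumes bij: "bij \<sigma>" and inf: "infinite (range (\<lambda>k. zpow \<sigma> k ` m))" and n: "n \<noteq> 0"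
  shows "zpow \<sigma> n ` zpow \<sigma> k ` m \<noteq> zpow \<sigma> k ` m"
proof
  define E where "E j = zpow \<sigma> j ` m" for j
  have E_shift: "zpow \<sigma> a ` E b = E (a + b)" for a b unfolding E_def by (simp add: zpow_image[OF bij])
  assume "zpow \<sigma> n ` zpow \<sigma> k ` m = zpow \<sigma> k ` m"
  then have fixed: "E (n + k) = E k" unfolding E_def by (simp add: zpow_image[OF bij])
  have period: "E (j + n) = E j" for j
  proof -
    have "E (j + n) = zpow \<sigma> (j - k) ` E (n + k)" by (simp add: E_shift algebra_simps)
    also have "\<dots> = E j" by (simp add: fixed E_shift)
    finally show ?thesis .
  qed
  have periods: "E (j + q * n) = E j" for j q
  proof (induction q rule: int_induct[where k = 0])
    case (step1 i) then show ?case using period[of "j + i * n"] by (simp add: algebra_simps)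
  next
    case (step2 i) then show ?case using period[of "j + (i - 1) * n"] by (simp add: algebra_simps)
  qed simp
  have "E j \<in> E ` {0..<\<bar>n\<bar>}" for j
  proof -
    have "\<bar>n\<bar> = sgn n * n" by (simp add: abs_sgn mult.commute)
    moreover have "j = j mod \<bar>n\<bar> + j div \<bar>n\<bar> * \<bar>n\<bar>" by simp
    ultimately have "j = j mod \<bar>n\<bar> + (j div \<bar>n\<bar> * sgn n) * n" by (simp add: mult.assoc)
    then have "E j = E (j mod \<bar>n\<bar>)" using periods by metis
    moreover have "j mod \<bar>n\<bar> \<in> {0..<\<bar>n\<bar>}" using n by simp
    ultimately show ?thesis by blast
  qed
  then have "range E \<subseteq> E ` {0..<\<bar>n\<bar>}" by blast
  then have "finite (range E)" by (rule finite_subset) simp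
  with inf show False unfolding E_def by simp
qed

locale BR_module =
  fixes \<sigma> :: "'r::comm_ring_1 \<Rightarrow> 'r" and H J :: "'r set"
    and act :: "(int \<Rightarrow> 'r) \<Rightarrow> 'm::ab_group_add \<Rightarrow> 'm"
  assumes ring_aut: "ring_aut \<sigma>" and module: "is_B_module \<sigma> H J act"
begin

abbreviation B :: "(int \<Rightarrow> 'r) set" where "B \<equiv> BR_alg \<sigma> H J"

lemma act_add_left: "b \<in> B \<Longrightarrow> b' \<in> B \<Longrightarrow> act (\<lambda>n. b n + b' n) v = act b v + act b' v"
  using module unfolding is_B_module_def by blast

lemma act_add: "b \<in> B \<Longrightarrow> act b (v + w) = act b v + act b w"
  using module unfolding is_B_module_def by blast

lemma act_one: "act sl_one v = v"
  using module unfolding is_B_module_def by blast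

lemma act_mult: "b \<in> B \<Longrightarrow> b' \<in> B \<Longrightarrow> act (sl_mult \<sigma> b b') v = act b (act b' v)"
  using module unfolding is_B_module_def by blast

lemma act_zero_left: "act (\<lambda>_. 0) v = 0"
  using act_add_left[OF zero_in_BR_alg zero_in_BR_alg, of v] by simp

lemma act_zero: "b \<in> B \<Longrightarrow> act b 0 = 0"
  using act_add[of b 0 0] by simp

lemma act_diff: "b \<in> B \<Longrightarrow> act b (v - w) = act b v - act b w"
  using act_add[of b "v - w" w] by (simp add: eq_diff_eq)

lemma act_eq_sum_single:
  assumes "finite F" "b \<in> B" "{n. b n \<noteq> 0} \<subseteq> F"
  shows "act b x = (\<Sum>i\<in>F. act (sl_single i (b i)) x)"
  using assms
proof (induction F arbitrary: b rule: finite_induct)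
  case empty
  then have "b = (\<lambda>_. 0)" by auto
  then show ?case by (simp add: act_zero_left)
next
  case (insert i F)
  define b' where "b' = (\<lambda>n. if n = i then 0 else b n)"
  have "b' \<in> B"
    using insert.prems(1) unfolding b'_def BR_alg_def skew_laurent_def
    by (auto simp: zero_in_BR_I intro: finite_subset[of _ "{n. b n \<noteq> 0}"])
  have "b = (\<lambda>n. sl_single i (b i) n + b' n)" unfolding b'_def sl_single_def by auto
  then have "act b x = act (sl_single i (b i)) x + act b' x"
    using act_add_left[OF sl_single_in_BR_alg[OF BR_alg_coeff[OF insert.prems(1)]] \<open>b' \<in> B\<close>] by metis
  also have "{n. b' n \<noteq> 0} \<subseteq> F" using insert.prems(2) unfolding b'_def by auto
  then have "act b' x = (\<Sum>j\<in>F. act (sl_single j (b' j)) x)" by (rule insert.IH[OF \<open>b' \<in> B\<close>])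
  also have "\<dots> = (\<Sum>j\<in>F. act (sl_single j (b j)) x)"
    using insert.hyps(2) unfolding b'_def by (intro sum.cong) auto
  finally show ?case using insert.hyps by simp
qed

lemma zero_in_weight_space: "0 \<in> weight_space act q"
  unfolding weight_space_def using act_zero sl_const_in_BR_alg by blast

lemma weight_space_diff:
  "v \<in> weight_space act q \<Longrightarrow> w \<in> weight_space act q \<Longrightarrow> v - w \<in> weight_space act q"
  unfolding weight_space_def using act_diff[OF sl_const_in_BR_alg] by simp

text \<open>The key identity is \<sigma>^n(c) \<cdot> r t^n = r t^n \<cdot> c.\<close>
lemma act_single_weight_space:
  assumes y: "y \<in> weight_space act q" and r: "r \<in> BR_I \<sigma> H J n"
  shows "act (sl_single n r) y \<in> weight_space act (zpow \<sigma> n ` q)"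
  unfolding weight_space_def
proof (intro CollectI ballI)
  fix c assume "c \<in> zpow \<sigma> n ` q"
  then obtain c0 where c0: "c0 \<in> q" "c = zpow \<sigma> n c0" by blast
  have rt: "sl_single n r \<in> B" using r by (rule sl_single_in_BR_alg)
  have "act (sl_const c) (act (sl_single n r) y) = act (sl_mult \<sigma> (sl_const c) (sl_single n r)) y"
    using act_mult[OF sl_const_in_BR_alg rt] by simp
  also have "\<dots> = act (sl_mult \<sigma> (sl_single n r) (sl_const c0)) y"
    unfolding sl_const_eq_single sl_mult_single[OF ring_aut] using c0 by (simp add: mult.commute)
  also have "\<dots> = act (sl_single n r) (act (sl_const c0) y)"
    using act_mult[OF rt sl_const_in_BR_alg] by simp
  also have "\<dots> = 0" using y c0 act_zero[OF rt] unfolding weight_space_def by simp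
  finally show "act (sl_const c) (act (sl_single n r) y) = 0" .
qed

lemma is_submodule_cyclic: "is_submodule \<sigma> H J act ((\<lambda>b. act b v) ` B)"
  unfolding is_submodule_def
proof (intro conjI ballI)
  show "0 \<in> (\<lambda>b. act b v) ` B" by (rule rev_image_eqI[OF zero_in_BR_alg]) (simp add: act_zero_left)
  show "x + y \<in> (\<lambda>b. act b v) ` B" if xy: "x \<in> (\<lambda>b. act b v) ` B" "y \<in> (\<lambda>b. act b v) ` B" for x y
  proof -
    obtain c d where "c \<in> B" "d \<in> B" "x = act c v" "y = act d v" using xy by blast
    then have "x + y = act (\<lambda>n. c n + d n) v" by (simp add: act_add_left)
    with \<open>c \<in> B\<close> \<open>d \<in> B\<close> show ?thesis by (simp add: BR_alg_add)
  qed
  show "act b x \<in> (\<lambda>b. act b v) ` B" if bx: "b \<in> B" "x \<in> (\<lambda>b. act b v) ` B" for b x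
  proof -
    obtain c where "c \<in> B" "x = act c v" using bx(2) by blast
    then have "act b x = act (sl_mult \<sigma> b c) v" by (simp add: act_mult bx(1))
    with \<open>c \<in> B\<close> show ?thesis by (simp add: BR_alg_mult[OF ring_aut bx(1)])
  qed
qed

lemma weight_space_subset_cyclic:
  assumes simple: "is_simple_B_module \<sigma> H J act" and weight: "is_weight_module act"
    and p: "is_maximal_ideal p" and aperiodic: "\<And>n. n \<noteq> 0 \<Longrightarrow> zpow \<sigma> n ` p \<noteq> p"
    and v: "v \<in> weight_space act p" "v \<noteq> 0"
  shows "weight_space act p \<subseteq> range (\<lambda>c. act (sl_const c) v)"
proof
  fix w assume w: "w \<in> weight_space act p"
  have "v \<in> (\<lambda>b. act b v) ` B"
    using act_one sl_const_in_BR_alg unfolding sl_one_eq_const by (metis image_eqI)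
  then have "(\<lambda>b. act b v) ` B = UNIV"
    using simple is_submodule_cyclic v(2) unfolding is_simple_B_module_def by blast
  then obtain b where b: "b \<in> B" "w = act b v" by (metis UNIV_I imageE)
  define F where "F = insert 0 {n. b n \<noteq> 0}"
  define x where "x i = act (sl_single i (b i)) v - (if i = 0 then w else 0)" for i
  have F: "finite F" unfolding F_def using BR_alg_finite_support[OF b(1)] by simp
  have "0 \<in> F" unfolding F_def by simp
  have "act b v = (\<Sum>i\<in>F. act (sl_single i (b i)) v)"
    by (rule act_eq_sum_single[OF F b(1)]) (auto simp: F_def)
  then have "(\<Sum>i\<in>F. x i) = act b v - w"
    unfolding x_def sum_subtractf using F \<open>0 \<in> F\<close> by simp
  then have "(\<Sum>i\<in>F. x i) = 0" using b(2) by simp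
  moreover have "inj_on (\<lambda>i. zpow \<sigma> i ` p) F"
  proof (rule inj_onI)
    fix i j assume "zpow \<sigma> i ` p = zpow \<sigma> j ` p"
    then have "zpow \<sigma> (- j) ` zpow \<sigma> i ` p = zpow \<sigma> (- j) ` zpow \<sigma> j ` p" by simp
    then have "zpow \<sigma> (i - j) ` p = p" by (simp add: zpow_image[OF ring_aut_bij[OF ring_aut]])
    then show "i = j" using aperiodic[of "i - j"] by auto
  qed
  moreover have "is_maximal_ideal (zpow \<sigma> i ` p) \<and> x i \<in> weight_space act (zpow \<sigma> i ` p)" for i
  proof -
    have "act (sl_single i (b i)) v \<in> weight_space act (zpow \<sigma> i ` p)"
      using act_single_weight_space[OF v(1) BR_alg_coeff[OF b(1)]] .
    then have "x i \<in> weight_space act (zpow \<sigma> i ` p)"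
      unfolding x_def using w zero_in_weight_space by (cases "i = 0") (auto intro: weight_space_diff)
    then show ?thesis using ring_aut_maximal_ideal[OF ring_aut_zpow[OF ring_aut] p] by blast
  qed
  ultimately have "x 0 = 0" using weight_module_component_eq_0[OF weight F] unfolding F_def by blast
  then show "w \<in> range (\<lambda>c. act (sl_const c) v)" unfolding x_def sl_const_eq_single by auto
qed

lemma weight_dim_le_1_if_cyclic:
  assumes "v \<in> weight_space act p" "weight_space act p \<subseteq> range (\<lambda>c. act (sl_const c) v)"
  shows "weight_dim act p \<le> 1"
proof -
  have "weight_spanned_by act p 1"
    unfolding weight_spanned_by_def using assms by (intro exI[of _ "[v]"]) auto
  then show ?thesis unfolding weight_dim_def by (rule Least_le)
qed

end

theorem proposition3p4:
  fixes of_k :: "'k::field \<Rightarrow> 'r::idom"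
    and \<sigma> :: "'r \<Rightarrow> 'r"
    and H J :: "'r set"
    and act :: "(int \<Rightarrow> 'r) \<Rightarrow> 'm::ab_group_add \<Rightarrow> 'm"
    and m :: "'r set"
  assumes "k_algebra_str of_k"
    and "k_alg_aut of_k \<sigma>"
    and "is_ideal H" and "is_ideal J"
    and "\<forall>n. BR_I \<sigma> H J n \<noteq> {0}"
    and "is_maximal_ideal m"
    and "infinite (range (\<lambda>k. zpow \<sigma> k ` m))"
    and "is_simple_B_module \<sigma> H J act"
    and "is_weight_module act"
    and "weight_support act \<subseteq> range (\<lambda>k. zpow \<sigma> k ` m)"
  shows "\<forall>k::int. weight_dim act (zpow \<sigma> k ` m) \<le> 1"
proof
  fix k :: int
  have \<sigma>: "ring_aut \<sigma>" using assms(2) by (rule k_alg_aut_imp_ring_aut)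
  interpret BR_module \<sigma> H J act
    using \<sigma> assms(8) unfolding is_simple_B_module_def by unfold_locales blast+
  let ?p = "zpow \<sigma> k ` m"
  have p: "is_maximal_ideal ?p" using ring_aut_maximal_ideal[OF ring_aut_zpow[OF \<sigma>] assms(6)] .
  have aperiodic: "zpow \<sigma> n ` ?p \<noteq> ?p" if "n \<noteq> 0" for n
    using infinite_orbit_aperiodic[OF ring_aut_bij[OF \<sigma>] assms(7) that] .
  show "weight_dim act ?p \<le> 1"
  proof (cases "weight_space act ?p \<subseteq> {0}")
    case True
    then show ?thesis using zero_in_weight_space act_zero[OF sl_const_in_BR_alg]
      by (intro weight_dim_le_1_if_cyclic[of 0]) auto
  next
    case False
    then obtain v where "v \<in> weight_space act ?p" "v \<noteq> 0" by blast
    with weight_space_subset_cyclic[OF assms(8,9) p aperiodic] show ?thesis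
      by (metis weight_dim_le_1_if_cyclic)
  qed
qed

end
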